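(* Let $G=(N,A)$ be an asymmetric directed graph on $n$ vertices and consider the simple asymmetric fractional hedonic game it induces. Every sequence of IS deviations starting from the singleton partition is finite if and only if $G$ is acyclic. Moreover, if $G$ is acyclic, every such sequence has length $\mathcal O(n^4)$.
   Context: A fractional hedonic game (FHG) on agents $N$ is given by utility functions $v_i:N\to\mathbb R$ with $v_i(i)=0$; agent $i$'s utility for a coalition $C\ni i$ is $\frac{1}{|C|}\sum_{j\in C}v_i(j)$. A simple asymmetric FHG is one with $v_i(j)\in\{0,1\}$ and $v_i(j)=1\Rightarrow v_j(i)=0$; it is induced by the asymmetric digraph with arc $(i,j)$ iff $v_i(j)=1$. The singleton partition is $\{\{i\}:i\in N\}$. An IS deviation of agent $i$ from partition $\pi$ to $\pi'$ is a move of $i$ alone from $\pi(i)$ into another coalition of $\pi$ or into a new singleton such that $i$ strictly prefers $\pi'(i)$ to $\pi(i)$ and every $j\in\pi'(i)\setminus\{i\}$ weakly prefers $\pi'(j)$ to $\pi(j)$. *)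

theory Defs
  imports Complex_Main "HOL-Library.Disjoint_Sets"
begin

definition asym_digraph :: "nat set \<Rightarrow> (nat \<times> nat) set \<Rightarrow> bool" where
  "asym_digraph N A \<longleftrightarrow> finite N \<and> A \<subseteq> N \<times> N \<and>
     (\<forall>i j. (i, j) \<in> A \<longrightarrow> (j, i) \<notin> A)"

definition val :: "(nat \<times> nat) set \<Rightarrow> nat \<Rightarrow> nat \<Rightarrow> real" where
  "val A i j = (if (i, j) \<in> A then 1 else 0)"

definition util :: "(nat \<times> nat) set \<Rightarrow> nat \<Rightarrow> nat set \<Rightarrow> real" where
  "util A i C = (\<Sum>j\<in>C. val A i j) / real (card C)"

definition coal :: "nat set set \<Rightarrow> nat \<Rightarrow> nat set" where
  "coal P i = (THE C. C \<in> P \<and> i \<in> C)"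

definition singleton_partition :: "nat set \<Rightarrow> nat set set" where
  "singleton_partition N = (\<lambda>i. {i}) ` N"

text \<open>Partition resulting from agent i leaving its coalition and joining T
  (T a coalition of P other than its own, or T = {} for a new singleton).\<close>
definition move :: "nat set set \<Rightarrow> nat \<Rightarrow> nat set \<Rightarrow> nat set set" where
  "move P i T = (P - {coal P i, T}) \<union> {insert i T} \<union>
     (if coal P i - {i} = {} then {} else {coal P i - {i}})"

definition IS_deviation :: "nat set \<Rightarrow> (nat \<times> nat) set \<Rightarrow> nat set set \<Rightarrow> nat set set \<Rightarrow> bool" where
  "IS_deviation N A P P' \<longleftrightarrow>
     (\<exists>i\<in>N. \<exists>T. ((T \<in> P \<and> T \<noteq> coal P i) \<or> T = {}) \<and>
        P' = move P i T \<and>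
        util A i (insert i T) > util A i (coal P i) \<and>
        (\<forall>j\<in>T. util A j (insert i T) \<ge> util A j (coal P j)))"

end

theory Submission
  imports Defs
begin

(*
  Acyclic case. Call a partition a tournament partition if any two members of a coalition are
  joined by an arc; the singleton partition is one. When agent i moves from C into T by an IS
  deviation, every member of T that does not point to i is diluted and so must be a sink of T,
  and i must point into T. As T has a unique sink z, i points exactly to z and all other members
  of T point to i: T + i is again a tournament with sink z, and the strict gain of i forces
  |T| + 1 < |C| unless i is the sink of C. Consequently the potential

    sum over X in P of  (2n + 1) * (1 + #ancestors of the sink of X) + |X|^2

  strictly decreases: if i is not the sink of C, only the quadratic part changes, and it drops;
  if it is, the new sink of C - i is an in-neighbour of i and has fewer ancestors, which outweighs
  the growth of the quadratic part (at most 2n). The singleton partition has potential O(n^3).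

  Cyclic case. Along an infinite walk w_0 -> w_1 -> ..., agent w_(k+1) leaves the pair
  {w_k, w_(k+1)}, where its utility is 0, for the singleton {w_(k+2)}, whose member loses nothing.
*)

definition sinks :: "(nat \<times> nat) set \<Rightarrow> nat set \<Rightarrow> nat set" where
  "sinks A X = {x\<in>X. \<forall>y\<in>X. (x, y) \<notin> A}"

definition tournament :: "(nat \<times> nat) set \<Rightarrow> nat set \<Rightarrow> bool" where
  "tournament A X \<longleftrightarrow> (\<forall>x\<in>X. \<forall>y\<in>X. x \<noteq> y \<longrightarrow> (x, y) \<in> A \<or> (y, x) \<in> A)"

definition out_degree :: "(nat \<times> nat) set \<Rightarrow> nat \<Rightarrow> nat set \<Rightarrow> nat" where
  "out_degree A i X = card {y\<in>X. (i, y) \<in> A}"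

definition rank :: "(nat \<times> nat) set \<Rightarrow> nat \<Rightarrow> nat" where
  "rank A x = card {y. (y, x) \<in> A\<^sup>+}"

lemma tournament_subset: "tournament A C \<Longrightarrow> X \<subseteq> C \<Longrightarrow> tournament A X"
  unfolding tournament_def by blast

lemma sinks_tournament: "tournament A X \<Longrightarrow> x \<in> sinks A X \<Longrightarrow> sinks A X = {x}"
  unfolding tournament_def sinks_def by blast

lemma sinks_nonempty:
  assumes "acyclic A" "finite X" "X \<noteq> {}"
  shows "sinks A X \<noteq> {}"
proof -
  have "wf ((A \<inter> X \<times> X)\<inverse>)"
    using assms by (intro finite_acyclic_wf_converse) (auto intro: acyclic_subset)
  then obtain x where "x \<in> X" "\<And>y. (y, x) \<in> (A \<inter> X \<times> X)\<inverse> \<Longrightarrow> y \<notin> X"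
    using wfE_min assms(3) by (metis ex_in_conv)
  then show ?thesis unfolding sinks_def by blast
qed

lemma out_degree_eq_0_iff: "finite X \<Longrightarrow> out_degree A i X = 0 \<longleftrightarrow> (\<forall>y\<in>X. (i, y) \<notin> A)"
  unfolding out_degree_def by auto

lemma ancestors_subset_Domain: "{y. (y, x) \<in> A\<^sup>+} \<subseteq> Domain A"
  by (blast dest: tranclD)

lemma rank_le_card:
  assumes "A \<subseteq> N \<times> N" "finite N"
  shows "rank A x \<le> card N"
proof -
  have "Domain A \<subseteq> N" using assms(1) by blast
  then have "{y. (y, x) \<in> A\<^sup>+} \<subseteq> N" by (rule order_trans[OF ancestors_subset_Domain])
  then show ?thesis unfolding rank_def using assms(2) by (rule card_mono[rotated])
qed

lemma rank_less:
  assumes "finite A" "acyclic A" "(x, y) \<in> A"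
  shows "rank A x < rank A y"
proof -
  have "{z. (z, x) \<in> A\<^sup>+} \<subseteq> {z. (z, y) \<in> A\<^sup>+}"
    using assms(3) by (auto intro: trancl_into_trancl)
  moreover have "x \<in> {z. (z, y) \<in> A\<^sup>+} - {z. (z, x) \<in> A\<^sup>+}"
    using assms(2,3) unfolding acyclic_def by auto
  ultimately have "{z. (z, x) \<in> A\<^sup>+} \<subset> {z. (z, y) \<in> A\<^sup>+}" by blast
  moreover have "finite {z. (z, y) \<in> A\<^sup>+}"
    using finite_subset[OF ancestors_subset_Domain finite_Domain[OF assms(1)]] .
  ultimately show ?thesis unfolding rank_def by (rule psubset_card_mono[rotated])
qed

lemma util_eq_out_degree: "finite X \<Longrightarrow> util A i X = out_degree A i X / card X"
  unfolding util_def val_def out_degree_def by (simp add: sum.If_cases Int_def)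

lemma util_nonneg: "0 \<le> util A i X"
  unfolding util_def val_def by (auto intro!: sum_nonneg divide_nonneg_nonneg)

lemma util_singleton: "(i, i) \<notin> A \<Longrightarrow> util A i {i} = 0"
  unfolding util_def val_def by simp

lemma util_insert_non_neighbour:
  assumes "finite T" "i \<notin> T" "(j, i) \<notin> A"
  shows "util A j (insert i T) = out_degree A j T / (card T + 1)"
proof -
  have "out_degree A j (insert i T) = out_degree A j T"
    unfolding out_degree_def using assms(3) by (metis (lifting) insert_iff)
  then show ?thesis using assms(1,2) by (simp add: util_eq_out_degree)
qed

lemma coal_eqI: "partition_on N P \<Longrightarrow> C \<in> P \<Longrightarrow> i \<in> C \<Longrightarrow> coal P i = C"
  unfolding coal_def by (rule the_equality) (auto dest: partition_onD2 disjointD)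

lemma move_eq:
  assumes "partition_on N P" "C \<in> P" "i \<in> C"
  shows "move P i T = insert (insert i T) (P - {C, T}) \<union> (if C - {i} = {} then {} else {C - {i}})"
  unfolding move_def coal_eqI[OF assms] by auto

lemma move_partition_on:
  assumes "partition_on N P" "C \<in> P" "i \<in> C" "T \<in> P" "T \<noteq> C"
  shows "partition_on N (move P i T)"
proof -
  note disj = disjointD[OF partition_onD2[OF assms(1)]]
  have "\<Union>(move P i T) = \<Union>P"
    using assms(2-4) unfolding move_eq[OF assms(1-3)] by auto
  moreover have "disjoint (move P i T)"
    using assms(2-5) disj unfolding move_eq[OF assms(1-3)] disjoint_def by (auto 4 3)
  moreover have "{} \<notin> move P i T"
    using partition_onD3[OF assms(1)] unfolding move_eq[OF assms(1-3)] by auto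
  ultimately show ?thesis using partition_onD1[OF assms(1)] by (simp add: partition_on_def)
qed

lemma sum_move:
  fixes f :: "nat set \<Rightarrow> 'a::comm_monoid_add"
  assumes "partition_on N P" "finite P" "C \<in> P" "i \<in> C" "T \<in> P" "T \<noteq> C" "f {} = 0"
  shows "sum f (move P i T) + f C + f T = sum f P + f (insert i T) + f (C - {i})"
proof -
  note disj = disjointD[OF partition_onD2[OF assms(1)]]
  have "T \<noteq> {}" using partition_onD3[OF assms(1)] assms(5) by blast
  moreover have "i \<notin> T" using disj[OF assms(3,5)] assms(4,6) by blast
  ultimately have join_new: "insert i T \<notin> P" using disj[OF _ assms(5)] by blast
  have remove_new: "C - {i} \<notin> P" if "C - {i} \<noteq> {}"
    using disj[OF _ assms(3)] assms(4) that by blast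
  define R where "R = P - {C, T}"
  have finR: "finite R" using assms(2) unfolding R_def by simp
  have "sum f P = f C + sum f (P - {C})" by (rule sum.remove[OF assms(2,3)])
  also have "sum f (P - {C}) = f T + sum f (P - {C} - {T})"
    using assms(2,5,6) by (intro sum.remove) auto
  also have "P - {C} - {T} = R" unfolding R_def by blast
  finally have "sum f P = f C + (f T + sum f R)" .
  moreover have "sum f (move P i T) = f (insert i T) + f (C - {i}) + sum f R"
  proof (cases "C - {i} = {}")
    case True
    then have "move P i T = insert (insert i T) R" unfolding move_eq[OF assms(1,3,4)] R_def by simp
    then show ?thesis using join_new finR assms(7) unfolding True R_def by simp
  next
    case False
    then have "move P i T = insert (insert i T) (insert (C - {i}) R)"
      unfolding move_eq[OF assms(1,3,4)] R_def by auto
    moreover have "C - {i} \<noteq> insert i T" by blast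
    ultimately show ?thesis using join_new remove_new[OF False] finR
      unfolding R_def by (simp add: add.assoc)
  qed
  ultimately show ?thesis by (simp add: ac_simps)
qed

(* Summing over all sinks makes this total; a nonempty tournament of an acyclic graph has exactly
   one sink. *)
definition sink_weight :: "(nat \<times> nat) set \<Rightarrow> nat set \<Rightarrow> nat" where
  "sink_weight A X = (\<Sum>x\<in>sinks A X. Suc (rank A x))"

definition coalition_potential :: "nat \<Rightarrow> (nat \<times> nat) set \<Rightarrow> nat set \<Rightarrow> nat" where
  "coalition_potential n A X = (2 * n + 1) * sink_weight A X + card X ^ 2"

definition potential :: "nat set \<Rightarrow> (nat \<times> nat) set \<Rightarrow> nat set set \<Rightarrow> nat" where
  "potential N A P = (\<Sum>X\<in>P. coalition_potential (card N) A X)"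

lemma sink_weight_empty [simp]: "sink_weight A {} = 0"
  unfolding sink_weight_def sinks_def by simp

lemma sink_weight_tournament:
  "tournament A X \<Longrightarrow> x \<in> sinks A X \<Longrightarrow> sink_weight A X = Suc (rank A x)"
  unfolding sink_weight_def by (simp add: sinks_tournament)

lemma sinks_remove_non_sink:
  assumes "acyclic A" "finite C" "tournament A C" "i \<in> C" "i \<notin> sinks A C"
  shows "sinks A (C - {i}) = sinks A C"
proof -
  obtain x where x: "x \<in> sinks A C"
    using sinks_nonempty[OF assms(1,2)] assms(4) by blast
  then have "x \<in> sinks A (C - {i})" using assms(5) unfolding sinks_def by blast
  moreover have "tournament A (C - {i})" using assms(3) by (rule tournament_subset) blast
  ultimately show ?thesis using sinks_tournament x assms(3) by metis
qed

lemma sink_weight_remove_sink: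
  assumes "finite A" "acyclic A" "finite C" "tournament A C" "i \<in> sinks A C"
  shows "sink_weight A (C - {i}) < sink_weight A C"
proof (cases "C - {i} = {}")
  case True
  then show ?thesis unfolding True sink_weight_tournament[OF assms(4,5)] by simp
next
  case False
  then obtain x where x: "x \<in> sinks A (C - {i})"
    using sinks_nonempty[OF assms(2) finite_Diff[OF assms(3)]] by blast
  have "tournament A (C - {i})" using assms(4) by (rule tournament_subset) blast
  then have "sink_weight A (C - {i}) = Suc (rank A x)" using x by (rule sink_weight_tournament)
  moreover have "x \<in> C" "x \<noteq> i" using x unfolding sinks_def by auto
  with assms(4,5) have "(x, i) \<in> A" unfolding sinks_def tournament_def by blast
  ultimately show ?thesis
    unfolding sink_weight_tournament[OF assms(4,5)] using rank_less[OF assms(1,2)] by simp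
qed

lemma coalition_potential_empty [simp]: "coalition_potential n A {} = 0"
  unfolding coalition_potential_def by simp

lemma coalition_potential_join_less:
  assumes "finite A" "acyclic A" "finite C" "tournament A C" "i \<in> C" "card T \<le> n"
    and sinks_join: "sinks A (insert i T) = sinks A T"
    and card_join: "card (insert i T) = card T + 1"
    and shrinks: "i \<notin> sinks A C \<Longrightarrow> card T + 1 < card C"
  shows "coalition_potential n A (insert i T) + coalition_potential n A (C - {i})
           < coalition_potential n A C + coalition_potential n A T"
proof -
  obtain s where s: "card C = Suc s" using assms(3,5) by (metis card_Suc_Diff1)
  have card_remove: "card (C - {i}) = s" using assms(3,5) s by simp
  have squares: "(card T + 1)^2 = card T^2 + 2 * card T + 1" "card C^2 = s^2 + 2 * s + 1"
    using s by (simp_all add: power2_eq_square)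
  have weight_join: "sink_weight A (insert i T) = sink_weight A T"
    unfolding sink_weight_def sinks_join ..
  note potentials = coalition_potential_def weight_join card_join card_remove
  show ?thesis
  proof (cases "i \<in> sinks A C")
    case True
    then have weight_drop: "sink_weight A (C - {i}) + 1 \<le> sink_weight A C"
      using sink_weight_remove_sink[OF assms(1-4) True] by simp
    have "(2 * n + 1) * sink_weight A (C - {i}) + (2 * n + 1) \<le> (2 * n + 1) * sink_weight A C"
      using mult_le_mono2[OF weight_drop, of "2 * n + 1"] by (simp add: distrib_left)
    with assms(6) squares show ?thesis unfolding potentials by linarith
  next
    case False
    have weight_remove: "sink_weight A (C - {i}) = sink_weight A C"
      unfolding sink_weight_def sinks_remove_non_sink[OF assms(2-5) False] ..
    from shrinks[OF False] s squares show ?thesis unfolding potentials weight_remove by linarith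
  qed
qed

definition tournament_partition :: "nat set \<Rightarrow> (nat \<times> nat) set \<Rightarrow> nat set set \<Rightarrow> bool" where
  "tournament_partition N A P \<longleftrightarrow> partition_on N P \<and> (\<forall>X\<in>P. tournament A X)"

lemma sink_if_weakly_prefers_join:
  assumes "finite T" "j \<in> T" "i \<notin> T" "(j, i) \<notin> A"
    and "util A j T \<le> util A j (insert i T)"
  shows "j \<in> sinks A T"
proof -
  have "card T > 0" using assms(1,2) card_gt_0_iff by blast
  moreover have "out_degree A j T / card T \<le> out_degree A j T / (card T + 1)"
    using assms(5)
    unfolding util_insert_non_neighbour[OF assms(1,3,4)] util_eq_out_degree[OF assms(1)] .
  ultimately have "out_degree A j T = 0" by (simp add: field_simps)
  then show ?thesis using assms(1,2) unfolding sinks_def by (simp add: out_degree_eq_0_iff)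
qed

lemma join_tournament:
  assumes asym: "\<And>a b. (a, b) \<in> A \<Longrightarrow> (b, a) \<notin> A"
    and "tournament A T" "finite T" "i \<notin> T" "0 < out_degree A i T"
    and weak: "\<forall>j\<in>T. util A j T \<le> util A j (insert i T)"
  shows "out_degree A i T = 1" "tournament A (insert i T)" "sinks A (insert i T) = sinks A T"
proof -
  have sink: "j \<in> sinks A T" if "j \<in> T" "(j, i) \<notin> A" for j
    using sink_if_weakly_prefers_join[OF assms(3) that(1) assms(4) that(2)] weak that(1) by blast
  have "{y\<in>T. (i, y) \<in> A} \<noteq> {}"
    using assms(5) unfolding out_degree_def by (metis card.empty less_irrefl)
  then obtain z where z: "z \<in> T" "(i, z) \<in> A" by blast
  have sinks_T: "sinks A T = {z}"
    using sinks_tournament[OF assms(2) sink[OF z(1) asym[OF z(2)]]] .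
  have "{y\<in>T. (i, y) \<in> A} = {z}"
  proof (intro equalityI subsetI)
    fix y assume "y \<in> {y\<in>T. (i, y) \<in> A}"
    then show "y \<in> {z}" using sink[of y] asym[of i y] sinks_T by blast
  qed (use z in blast)
  then show "out_degree A i T = 1" unfolding out_degree_def by simp
  have others: "(j, i) \<in> A" if "j \<in> T" "j \<noteq> z" for j
    using sink[OF that(1)] sinks_T that(2) by blast
  show tour: "tournament A (insert i T)"
    using assms(2) z others unfolding tournament_def by (metis insert_iff)
  have "z \<in> sinks A (insert i T)"
    using sinks_T asym[OF z(2)] unfolding sinks_def by blast
  then show "sinks A (insert i T) = sinks A T"
    unfolding sinks_T by (rule sinks_tournament[OF tour])
qed

lemma IS_deviation_join_tournament:
  assumes "asym_digraph N A" "tournament_partition N A P" "IS_deviation N A P P'"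
  obtains i C T where "P' = move P i T" "C \<in> P" "i \<in> C" "T \<in> P" "T \<noteq> C" "i \<notin> T"
    "tournament A (insert i T)" "sinks A (insert i T) = sinks A T"
    "i \<notin> sinks A C \<Longrightarrow> card T + 1 < card C"
proof -
  have finN: "finite N" and asym: "\<And>a b. (a, b) \<in> A \<Longrightarrow> (b, a) \<notin> A"
    using assms(1) unfolding asym_digraph_def by blast+
  have irrefl: "\<And>a. (a, a) \<notin> A" using asym by blast
  have part: "partition_on N P" and tour: "\<forall>X\<in>P. tournament A X"
    using assms(2) unfolding tournament_partition_def by blast+
  have finite: "finite X" if "X \<in> P" for X
    using that finN partition_onD1[OF part] by (meson Union_upper finite_subset)
  obtain i T where "i \<in> N" and target: "(T \<in> P \<and> T \<noteq> coal P i) \<or> T = {}"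
    and P': "P' = move P i T"
    and strict: "util A i (coal P i) < util A i (insert i T)"
    and weak: "\<forall>j\<in>T. util A j (coal P j) \<le> util A j (insert i T)"
    using assms(3) unfolding IS_deviation_def by blast
  obtain C where C: "C \<in> P" "i \<in> C" using \<open>i \<in> N\<close> partition_onD1[OF part] by blast
  have coal_i: "coal P i = C" using coal_eqI[OF part C] .
  have "T \<noteq> {}" using strict util_nonneg[of A i "coal P i"] util_singleton[OF irrefl] by auto
  then have T: "T \<in> P" "T \<noteq> C" using target coal_i by auto
  have "i \<notin> T" using partition_onD2[OF part] C T by (auto dest: disjointD)
  have weak_T: "\<forall>j\<in>T. util A j T \<le> util A j (insert i T)"
    using weak coal_eqI[OF part T(1)] by simp
  have strict_T: "util A i C < out_degree A i T / (card T + 1)"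
    using strict unfolding coal_i util_insert_non_neighbour[OF finite[OF T(1)] \<open>i \<notin> T\<close> irrefl] .
  then have "0 < out_degree A i T" using util_nonneg[of A i C] by (cases "out_degree A i T") auto
  note join =
    join_tournament[OF asym tour[rule_format, OF T(1)] finite[OF T(1)] \<open>i \<notin> T\<close> this weak_T]
  have "card T + 1 < card C" if "i \<notin> sinks A C"
  proof -
    have "out_degree A i C \<noteq> 0"
      using that C finite[OF C(1)] out_degree_eq_0_iff unfolding sinks_def by blast
    then have "1 / card C \<le> util A i C"
      using finite[OF C(1)] by (simp add: util_eq_out_degree divide_right_mono)
    with strict_T join(1) have "1 / real (card C) < 1 / real (card T + 1)" by simp
    moreover have "card C > 0" using C finite[OF C(1)] card_gt_0_iff by blast
    ultimately show ?thesis by (simp add: field_simps)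
  qed
  with that P' C T \<open>i \<notin> T\<close> join(2,3) show ?thesis by blast
qed

lemma IS_deviation_potential_less:
  assumes "asym_digraph N A" "acyclic A" "tournament_partition N A P" "IS_deviation N A P P'"
  shows "tournament_partition N A P'" "potential N A P' < potential N A P"
proof -
  have finN: "finite N" and AN: "A \<subseteq> N \<times> N"
    using assms(1) unfolding asym_digraph_def by blast+
  have finA: "finite A" using finN AN by (meson finite_SigmaI finite_subset)
  have part: "partition_on N P" and tour: "\<forall>X\<in>P. tournament A X"
    using assms(3) unfolding tournament_partition_def by blast+
  obtain i C T where P': "P' = move P i T" and C: "C \<in> P" "i \<in> C"
    and T: "T \<in> P" "T \<noteq> C" "i \<notin> T"
    and join: "tournament A (insert i T)" "sinks A (insert i T) = sinks A T"
    and shrinks: "i \<notin> sinks A C \<Longrightarrow> card T + 1 < card C"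
    using IS_deviation_join_tournament[OF assms(1,3,4)] by blast
  have sub: "X \<subseteq> N" if "X \<in> P" for X using partition_onD1[OF part] that by blast
  have finC: "finite C" and finT: "finite T" using sub C T finN finite_subset by blast+
  show "tournament_partition N A P'"
    unfolding tournament_partition_def P'
  proof
    show "partition_on N (move P i T)" using move_partition_on[OF part C T(1,2)] .
    show "\<forall>X\<in>move P i T. tournament A X"
      using tour join(1) C(1) tournament_subset[of A C "C - {i}"] unfolding move_eq[OF part C]
      by auto
  qed
  let ?f = "coalition_potential (card N) A"
  have "?f (insert i T) + ?f (C - {i}) < ?f C + ?f T"
  proof (rule coalition_potential_join_less[OF finA assms(2) finC _ C(2) _ join(2) _ shrinks])
    show "tournament A C" using tour C(1) by blast
    show "card T \<le> card N" using card_mono[OF finN sub[OF T(1)]] .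
    show "card (insert i T) = card T + 1" using finT T(3) by simp
  qed
  moreover have "sum ?f P' + ?f C + ?f T = sum ?f P + ?f (insert i T) + ?f (C - {i})"
    unfolding P' using sum_move[OF part finite_elements[OF finN part] C T(1,2), where f = ?f]
    by simp
  ultimately show "potential N A P' < potential N A P" unfolding potential_def by linarith
qed

lemma IS_sequence_length_le_potential:
  assumes "asym_digraph N A" "acyclic A" "tournament_partition N A (f 0)"
    and "\<forall>k<m. IS_deviation N A (f k) (f (Suc k))"
  shows "m \<le> potential N A (f 0)"
proof -
  have "tournament_partition N A (f k) \<and> potential N A (f k) + k \<le> potential N A (f 0)"
    if "k \<le> m" for k
    using that
  proof (induction k)
    case (Suc k)
    then have "tournament_partition N A (f k)" "IS_deviation N A (f k) (f (Suc k))"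
      using assms(4) by auto
    then show ?case using IS_deviation_potential_less[OF assms(1,2)] Suc by fastforce
  qed (use assms(3) in simp)
  then show ?thesis by fastforce
qed

lemma tournament_partition_singleton:
  "tournament_partition N A (singleton_partition N)"
  unfolding tournament_partition_def singleton_partition_def tournament_def
  using partition_on_singletons by auto

lemma potential_singleton_partition_le:
  assumes "asym_digraph N A"
  shows "potential N A (singleton_partition N) \<le> 7 * card N ^ 4"
proof -
  define n where "n = card N"
  have finN: "finite N" and AN: "A \<subseteq> N \<times> N" and irrefl: "\<And>a. (a, a) \<notin> A"
    using assms unfolding asym_digraph_def by blast+
  have bound: "coalition_potential n A X \<le> (2 * n + 1) * (n + 1) + 1"
    if "X \<in> singleton_partition N" for X
  proof -
    obtain x where X: "X = {x}"
      using \<open>X \<in> singleton_partition N\<close> unfolding singleton_partition_def by blast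
    have "x \<in> sinks A {x}" using irrefl unfolding sinks_def by blast
    then have "sink_weight A {x} = Suc (rank A x)"
      by (rule sink_weight_tournament[rotated]) (simp add: tournament_def)
    also have "\<dots> \<le> n + 1" using rank_le_card[OF AN finN] unfolding n_def by simp
    finally have "(2 * n + 1) * sink_weight A {x} \<le> (2 * n + 1) * (n + 1)" by (rule mult_le_mono2)
    then show ?thesis unfolding coalition_potential_def X by simp
  qed
  have "potential N A (singleton_partition N)
          \<le> card (singleton_partition N) * ((2 * n + 1) * (n + 1) + 1)"
    unfolding potential_def n_def[symmetric] using sum_bounded_above[OF bound] by simp
  also have "\<dots> \<le> n * ((2 * n + 1) * (n + 1) + 1)"
    unfolding singleton_partition_def n_def by (intro mult_le_mono1 card_image_le finN)
  also have "\<dots> \<le> 7 * n ^ 4"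
  proof (cases "n = 0")
    case False
    then have "n ^ k \<le> n ^ 4" if "k \<le> 4" for k using power_increasing[OF that, of n] by simp
    from this[of 1] this[of 2] this[of 3] show ?thesis
      by (simp add: power2_eq_square power3_eq_cube algebra_simps)
  qed simp
  finally show ?thesis unfolding n_def .
qed

lemma IS_sequence_from_singletons_length_le:
  assumes "asym_digraph N A" "acyclic A" "f 0 = singleton_partition N"
    and "\<forall>k<m. IS_deviation N A (f k) (f (Suc k))"
  shows "m \<le> 7 * card N ^ 4"
proof -
  have "m \<le> potential N A (f 0)"
    using IS_sequence_length_le_potential[OF assms(1,2) _ assms(4)] tournament_partition_singleton
      assms(3)
    by simp
  also have "\<dots> \<le> 7 * card N ^ 4"
    using potential_singleton_partition_le[OF assms(1)] assms(3) by simp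
  finally show ?thesis .
qed

lemma infinite_walk_if_not_acyclic:
  assumes "\<not> acyclic A"
  obtains w where "\<And>k. (w k, w (Suc k)) \<in> A"
proof -
  have "\<not> wf (A\<inverse>)" using assms wf_acyclic acyclic_converse by blast
  then show ?thesis using that unfolding wf_iff_no_infinite_down_chain by auto
qed

definition pair_partition :: "nat set \<Rightarrow> nat \<Rightarrow> nat \<Rightarrow> nat set set" where
  "pair_partition N a b = insert {a, b} ((\<lambda>y. {y}) ` (N - {a, b}))"

lemma partition_on_pair_partition:
  "a \<in> N \<Longrightarrow> b \<in> N \<Longrightarrow> partition_on N (pair_partition N a b)"
  unfolding pair_partition_def
  by (subst partition_on_insert) (auto simp: disjnt_def partition_on_singletons)

lemma coal_pair_partition:
  "a \<in> N \<Longrightarrow> b \<in> N \<Longrightarrow> coal (pair_partition N a b) b = {a, b}"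
  using coal_eqI[OF partition_on_pair_partition] unfolding pair_partition_def by blast

lemma move_singleton_partition:
  assumes "a \<in> N" "b \<in> N" "a \<noteq> b"
  shows "move (singleton_partition N) a {b} = pair_partition N a b"
proof -
  have "coal (singleton_partition N) a = {a}"
    using coal_eqI[OF partition_on_singletons] assms(1) unfolding singleton_partition_def by blast
  then show ?thesis
    using assms unfolding move_def singleton_partition_def pair_partition_def by auto
qed

lemma move_pair_partition:
  assumes "a \<in> N" "b \<in> N" "c \<in> N" "a \<noteq> b" "b \<noteq> c" "a \<noteq> c"
  shows "move (pair_partition N a b) b {c} = pair_partition N b c"
  using assms coal_pair_partition[OF assms(1,2)] unfolding move_def pair_partition_def by auto

lemma IS_deviation_to_out_neighbour:
  assumes "asym_digraph N A" "partition_on N P" "{j} \<in> P" "(i, j) \<in> A" "util A i (coal P i) = 0"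
  shows "IS_deviation N A P (move P i {j})"
proof -
  have AN: "A \<subseteq> N \<times> N" and asym: "\<And>a b. (a, b) \<in> A \<Longrightarrow> (b, a) \<notin> A"
    using assms(1) unfolding asym_digraph_def by blast+
  have "i \<in> N" using assms(4) AN by blast
  then obtain C where C: "C \<in> P" "i \<in> C" using partition_onD1[OF assms(2)] by blast
  have "i \<noteq> j" using asym assms(4) by blast
  then have "{j} \<noteq> coal P i" using coal_eqI[OF assms(2) C] C(2) by blast
  moreover have "util A i {i, j} = 1 / 2" "util A j {i, j} = 0" "util A j {j} = 0"
    using assms(4) asym[OF assms(4)] asym[of i i] asym[of j j] \<open>i \<noteq> j\<close>
    unfolding util_def val_def by auto
  moreover have "coal P j = {j}" using coal_eqI[OF assms(2,3)] by blast
  ultimately show ?thesis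
    using \<open>i \<in> N\<close> assms(3,5) unfolding IS_deviation_def by (auto intro!: exI[of _ "{j}"])
qed

lemma infinite_IS_sequence_if_not_acyclic:
  assumes "asym_digraph N A" "\<not> acyclic A"
  obtains f where "f 0 = singleton_partition N" "\<And>k. IS_deviation N A (f k) (f (Suc k))"
proof -
  have AN: "A \<subseteq> N \<times> N" and asym: "\<And>a b. (a, b) \<in> A \<Longrightarrow> (b, a) \<notin> A"
    using assms(1) unfolding asym_digraph_def by blast+
  obtain w where w: "\<And>k. (w k, w (Suc k)) \<in> A"
    using infinite_walk_if_not_acyclic[OF assms(2)] by metis
  have wN: "w k \<in> N" for k using w[of k] AN by blast
  have w_ne: "w k \<noteq> w (Suc k)" "w k \<noteq> w (Suc (Suc k))" for k
    using w[of k] w[of "Suc k"] asym by fastforce+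
  define f where "f k = (case k of
      0 \<Rightarrow> singleton_partition N
    | Suc j \<Rightarrow> pair_partition N (w j) (w (Suc j)))" for k
  have "IS_deviation N A (f k) (f (Suc k))" for k
  proof (cases k)
    case 0
    have S: "partition_on N (singleton_partition N)"
      unfolding singleton_partition_def by (rule partition_on_singletons)
    have "coal (singleton_partition N) (w 0) = {w 0}"
      using coal_eqI[OF S] wN unfolding singleton_partition_def by blast
    then have "util A (w 0) (coal (singleton_partition N) (w 0)) = 0"
      using util_singleton asym by metis
    moreover have "{w 1} \<in> singleton_partition N"
      using wN unfolding singleton_partition_def by blast
    ultimately show ?thesis
      using IS_deviation_to_out_neighbour[OF assms(1) S _ w[of 0]]
        move_singleton_partition[OF wN wN w_ne(1)]
      unfolding f_def 0 by simp
  next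
    case (Suc j)
    let ?Q = "pair_partition N (w j) (w (Suc j))"
    have Q: "partition_on N ?Q" by (rule partition_on_pair_partition[OF wN wN])
    have "(w (Suc j), w j) \<notin> A" "(w (Suc j), w (Suc j)) \<notin> A" using asym w[of j] by blast+
    then have "util A (w (Suc j)) {w j, w (Suc j)} = 0"
      unfolding util_def val_def using w_ne(1)[of j] by simp
    then have "util A (w (Suc j)) (coal ?Q (w (Suc j))) = 0" using coal_pair_partition wN by simp
    moreover have "w (Suc (Suc j)) \<in> N - {w j, w (Suc j)}"
      using wN w_ne(1)[of "Suc j"] w_ne(2)[of j] by auto
    then have "{w (Suc (Suc j))} \<in> ?Q" unfolding pair_partition_def by blast
    ultimately show ?thesis
      using IS_deviation_to_out_neighbour[OF assms(1) Q _ w[of "Suc j"]]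
        move_pair_partition[OF wN wN wN w_ne(1)[of j] w_ne(1)[of "Suc j"] w_ne(2)[of j]]
      unfolding f_def Suc by simp
  qed
  moreover have "f 0 = singleton_partition N" unfolding f_def by simp
  ultimately show ?thesis using that by blast
qed

theorem proposition5p5:
  shows "(\<forall>N A. asym_digraph N A \<longrightarrow>
            ((\<nexists>f :: nat \<Rightarrow> nat set set. f 0 = singleton_partition N \<and>
                 (\<forall>k. IS_deviation N A (f k) (f (Suc k))))
             \<longleftrightarrow> acyclic A))
       \<and> (\<exists>c :: nat. \<forall>N A (f :: nat \<Rightarrow> nat set set) m.
            asym_digraph N A \<and> acyclic A \<and> f 0 = singleton_partition N \<and>
            (\<forall>k<m. IS_deviation N A (f k) (f (Suc k)))
            \<longrightarrow> m \<le> c * card N ^ 4)"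
proof (intro conjI allI impI iffI)
  fix N A
  assume "asym_digraph N A"
    and "\<nexists>f. f 0 = singleton_partition N \<and> (\<forall>k. IS_deviation N A (f k) (f (Suc k)))"
  then show "acyclic A" using infinite_IS_sequence_if_not_acyclic by metis
next
  fix N A
  assume "asym_digraph N A" "acyclic A"
  from IS_sequence_from_singletons_length_le[OF this, where m = "Suc (7 * card N ^ 4)"]
  show "\<nexists>f. f 0 = singleton_partition N \<and> (\<forall>k. IS_deviation N A (f k) (f (Suc k)))"
    by (metis Suc_n_not_le_n)
next
  show "\<exists>c. \<forall>N A f m. asym_digraph N A \<and> acyclic A \<and> f 0 = singleton_partition N \<and>
          (\<forall>k<m. IS_deviation N A (f k) (f (Suc k))) \<longrightarrow> m \<le> c * card N ^ 4"
    using IS_sequence_from_singletons_length_le by (intro exI[of _ 7]) meson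
qed

end
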